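(* Let $\Omega\subset\mathbb{R}^N$ be a bounded open set and let $p,q:\Omega\to[1,\infty)$ be measurable with $q(x)\le p(x)\le p_+<\infty$ for all $x\in\Omega$. Let $K\subset\Omega$ be compact and suppose $\varphi(t)=|\{x\in\Omega:d_K(x)<t\}|\le C(\ln(e/t))^{1-\sigma}$ for all $t\in(0,1]$, for some $C>0$ and $\sigma>1$. Let $\psi:(e,\infty)\to(0,\infty)$ be such that $\psi(t)/\ln\ln t$ is decreasing and $\lim_{t\to\infty}\psi(t)=\infty$, and assume that for a.e. $x\in\Omega$ we have $0<d_K(x)<1/e$ and $$\frac{1}{p(x)-q(x)}\le\frac{\ln\ln(1/d_K(x))}{\psi(1/d_K(x))}.$$ Then $L^{p(\cdot)}(\Omega)$ is almost-compactly embedded in $L^{q(\cdot)}(\Omega)$.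
   Context: $d_K(x)=\operatorname{dist}(x,K)$; $\frac1{p(x)-q(x)}=+\infty$ where $p(x)=q(x)$. For measurable $e:\Omega\to[1,\infty)$, $\|u\|_{e(\cdot)}=\inf\{\lambda>0:\int_\Omega|u(x)/\lambda|^{e(x)}dx\le1\}$ and $L^{e(\cdot)}(\Omega)$ is the set of measurable $u$ with finite norm. Almost-compact embedding: for Banach function spaces $X,Y$ on $\Omega$, $X$ is almost-compactly embedded in $Y$ if for every sequence $\{E_n\}$ of measurable subsets of $\Omega$ with $\chi_{E_n}\to0$ pointwise a.e. one has $\lim_{n\to\infty}\sup_{\|u\|_X\le1}\|u\chi_{E_n}\|_Y=0$. *)

theory Defs
  imports "HOL-Analysis.Analysis"
begin

definition var_modular :: "('a::euclidean_space \<Rightarrow> real) \<Rightarrow> 'a set \<Rightarrow> ('a \<Rightarrow> real) \<Rightarrow> ennreal" where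
  "var_modular e \<Omega> u = (\<integral>\<^sup>+ x\<in>\<Omega>. ennreal (\<bar>u x\<bar> powr e x) \<partial>lebesgue)"

text \<open>Luxemburg norm; it is infinite when no admissible lambda exists.\<close>
definition lux_norm :: "('a::euclidean_space \<Rightarrow> real) \<Rightarrow> 'a set \<Rightarrow> ('a \<Rightarrow> real) \<Rightarrow> ereal" where
  "lux_norm e \<Omega> u = Inf {ereal l | l. l > 0 \<and> var_modular e \<Omega> (\<lambda>x. u x / l) \<le> 1}"

definition var_Lp :: "('a::euclidean_space \<Rightarrow> real) \<Rightarrow> 'a set \<Rightarrow> ('a \<Rightarrow> real) set" where
  "var_Lp e \<Omega> = {u. set_borel_measurable lebesgue \<Omega> u \<and> lux_norm e \<Omega> u < \<infinity>}"

definition almost_compact_emb :: "'a::euclidean_space set \<Rightarrow> ('a \<Rightarrow> real) \<Rightarrow> ('a \<Rightarrow> real) \<Rightarrow> bool" where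
  "almost_compact_emb \<Omega> p q \<longleftrightarrow>
     (\<forall>E :: nat \<Rightarrow> 'a set.
        (\<forall>n. E n \<in> sets lebesgue \<and> E n \<subseteq> \<Omega>) \<and>
        (AE x in lebesgue. x \<in> \<Omega> \<longrightarrow> (\<lambda>n. indicator (E n) x :: real) \<longlonglongrightarrow> 0)
        \<longrightarrow> (\<lambda>n. SUP u\<in>{u \<in> var_Lp p \<Omega>. lux_norm p \<Omega> u \<le> 1}.
                    lux_norm q \<Omega> (\<lambda>x. u x * indicator (E n) x)) \<longlonglongrightarrow> 0)"

end

theory Submission
  imports Defs
begin

text \<open>Split \<open>|u|\<^bsup>q\<^esup>\<close> at the level \<open>M = B ln(e/d\<^sub>K)\<^sup>\<gamma>\<close>:
  \<open>|u|\<^bsup>q\<^esup> \<le> M\<^bsup>P\<^esup> + M\<^bsup>q-p\<^esup> |u|\<^bsup>p\<^esup>\<close> with \<open>P \<ge> p\<^sub>+\<close>.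
  The bound on \<open>1/(p - q)\<close> gives \<open>M\<^bsup>q-p\<^esup> \<le> \<eta>\<close> once \<open>B\<close> is large enough for the given
  \<open>\<eta> > 0\<close>, and the decay of \<open>|{d\<^sub>K < t}|\<close> makes \<open>M\<^bsup>P\<^esup>\<close> integrable as soon as
  \<open>\<gamma>P < \<sigma> - 1\<close>. For \<open>u\<close> in the unit ball of \<open>L\<^bsup>p(\<cdot>)\<^esup>\<close> the \<open>q\<close>-modular of
  \<open>u \<chi>\<^bsub>E\<^sub>n\<^esub>/\<lambda>\<close> is therefore at most \<open>c(\<lambda>) (\<integral>\<^bsub>E\<^sub>n\<^esub> M\<^bsup>P\<^esup> + \<eta>)\<close>,
  and the integral tends to \<open>0\<close> by dominated convergence, uniformly in \<open>u\<close>.\<close>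

lemma one_less_ln: "exp 1 < s \<Longrightarrow> 1 < ln (s::real)"
  by (metis exp_gt_zero less_trans ln_exp ln_less_cancel_iff)

lemma one_less_ln_exp_div:
  fixes d :: real
  assumes "0 < d" "d < 1 / exp 1"
  shows "1 < ln (exp 1 / d)"
proof -
  have "exp 1 < 1 / d"
    using assms by (simp add: field_simps)
  then have "1 < ln (1 / d)"
    by (rule one_less_ln)
  moreover have "ln (exp 1 / d) = 1 + ln (1 / d)"
    using assms(1) by (simp add: ln_div)
  ultimately show ?thesis
    by linarith
qed

lemma two_power_powr: "((2::real) ^ j) powr a = (2 powr a) ^ j"
  by (simp add: powr_power powr_realpow[symmetric] powr_powr mult.commute)

lemma exists_dyadic_bracket:
  fixes L :: real
  assumes "1 < L"
  shows "\<exists>k::nat. 2 ^ k < L \<and> L \<le> 2 ^ (k + 1)"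
proof -
  obtain n :: nat where "L < 2 ^ n"
    using real_arch_pow[of 2 L] by auto
  then have n: "L \<le> 2 ^ (n + 1)"
    by (meson le_add1 less_imp_le one_le_numeral order.strict_trans2 power_increasing)
  define k where "k = (LEAST n::nat. L \<le> 2 ^ (n + 1))"
  have "L \<le> 2 ^ (k + 1)"
    unfolding k_def using n by (rule LeastI)
  moreover have "2 ^ k < L"
  proof (cases k)
    case 0
    then show ?thesis using assms by simp
  next
    case (Suc m)
    then have "\<not> L \<le> 2 ^ (m + 1)"
      using not_less_Least[of m "\<lambda>n::nat. L \<le> 2 ^ (n + 1)"] unfolding k_def by auto
    then show ?thesis using Suc by simp
  qed
  ultimately show ?thesis by blast
qed

lemma ln_exp_div_powr_le_dyadic:
  fixes d \<beta> :: real
  assumes "0 < d" "d < 1 / exp 1" "0 \<le> \<beta>"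
  shows "\<exists>k::nat. d < exp (1 - 2 ^ k) \<and> ln (exp 1 / d) powr \<beta> \<le> (2 powr \<beta>) ^ (k + 1)"
proof -
  have ln_eq: "ln (exp 1 / d) = 1 - ln d"
    using assms by (simp add: ln_div)
  have gt1: "1 < ln (exp 1 / d)"
    using assms(1,2) by (rule one_less_ln_exp_div)
  obtain k where k: "2 ^ k < ln (exp 1 / d)" "ln (exp 1 / d) \<le> 2 ^ (k + 1)"
    using exists_dyadic_bracket[OF gt1] by blast
  have "ln d < 1 - 2 ^ k"
    using k(1) ln_eq by simp
  then have "d < exp (1 - 2 ^ k)"
    using assms(1) by (metis exp_less_cancel_iff exp_ln)
  moreover have "ln (exp 1 / d) powr \<beta> \<le> (2 ^ (k + 1)) powr \<beta>"
    using gt1 k(2) assms(3) by (intro powr_mono2) auto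
  ultimately show ?thesis
    unfolding two_power_powr by blast
qed

text \<open>Dyadic layers: on the set where \<open>ln (e/d)\<close> is about \<open>2\<^sup>j\<close> the weight is
  about \<open>2\<^bsup>\<beta>j\<^esup>\<close>, while the level-set hypothesis gives that set measure \<open>O(2\<^bsup>(1-\<sigma>)j\<^esup>\<close>.\<close>
lemma nn_integral_ln_powr_finite:
  fixes M :: "'a measure" and d :: "'a \<Rightarrow> real"
  assumes [measurable]: "\<Omega> \<in> sets M" and fin: "emeasure M \<Omega> < \<infinity>"
    and [measurable]: "d \<in> borel_measurable M"
    and level_sets: "\<forall>t\<in>{0<..1}. measure M {x\<in>\<Omega>. d x < t} \<le> C * ln (exp 1 / t) powr (1 - \<sigma>)"
    and range: "AE x in M. x \<in> \<Omega> \<longrightarrow> 0 < d x \<and> d x < 1 / exp 1"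
    and "0 \<le> \<beta>" "\<beta> < \<sigma> - 1" "0 < C"
  shows "(\<integral>\<^sup>+ x\<in>\<Omega>. ennreal (ln (exp 1 / d x) powr \<beta>) \<partial>M) < \<infinity>"
proof -
  define A where "A j = {x\<in>\<Omega>. d x < exp (1 - 2 ^ j)}" for j :: nat
  define r where "r = 2 powr \<beta>"
  define \<rho> where "\<rho> = 2 powr (1 - \<sigma>)"
  have [measurable]: "A j \<in> sets M" for j
    unfolding A_def by measurable
  have r1: "1 \<le> r"
    unfolding r_def using \<open>0 \<le> \<beta>\<close> by (simp add: ge_one_powr_ge_zero)
  have A_bound: "emeasure M (A j) \<le> ennreal (C * \<rho> ^ j)" for j
  proof -
    have "emeasure M (A j) \<le> emeasure M \<Omega>"
      by (rule emeasure_mono) (auto simp: A_def)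
    then have "emeasure M (A j) = ennreal (measure M (A j))"
      using fin by (intro emeasure_eq_ennreal_measure) (simp add: top.not_eq_extremum)
    moreover have "measure M (A j) \<le> C * ln (exp 1 / exp (1 - 2 ^ j)) powr (1 - \<sigma>)"
      using level_sets unfolding A_def by auto
    moreover have "ln (exp 1 / exp (1 - 2 ^ j)) powr (1 - \<sigma>) = \<rho> ^ j"
      by (simp add: \<rho>_def exp_diff[symmetric] two_power_powr)
    ultimately show ?thesis
      by (simp add: ennreal_leI)
  qed
  have pointwise: "AE x in M. ennreal (ln (exp 1 / d x) powr \<beta>) * indicator \<Omega> x
      \<le> (\<Sum>j. ennreal (r ^ (j + 1)) * indicator (A j) x)"
    using range
  proof eventually_elim
    case (elim x)
    show ?case
    proof (cases "x \<in> \<Omega>")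
      case True
      then obtain k where "d x < exp (1 - 2 ^ k)" "ln (exp 1 / d x) powr \<beta> \<le> r ^ (k + 1)"
        using elim ln_exp_div_powr_le_dyadic \<open>0 \<le> \<beta>\<close> unfolding r_def by blast
      then have "ennreal (ln (exp 1 / d x) powr \<beta>) * indicator \<Omega> x
          \<le> ennreal (r ^ (k + 1)) * indicator (A k) x"
        using True by (simp add: A_def ennreal_leI)
      also have "\<dots> \<le> (\<Sum>j. ennreal (r ^ (j + 1)) * indicator (A j) x)"
        using sum_le_suminf[OF summableI, of "{k}"] by simp
      finally show ?thesis .
    qed simp
  qed
  have geometric: "summable (\<lambda>j. (r * \<rho>) ^ j)"
  proof (rule summable_geometric)
    have "r * \<rho> = 2 powr (\<beta> + 1 - \<sigma>)"
      by (simp add: r_def \<rho>_def powr_add[symmetric] add_diff_eq)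
    also have "\<dots> < 2 powr 0"
      using \<open>\<beta> < \<sigma> - 1\<close> by (intro powr_less_mono) auto
    finally show "norm (r * \<rho>) < 1"
      using r1 by (simp add: \<rho>_def)
  qed
  have "(\<integral>\<^sup>+ x\<in>\<Omega>. ennreal (ln (exp 1 / d x) powr \<beta>) \<partial>M)
      \<le> (\<integral>\<^sup>+ x. (\<Sum>j. ennreal (r ^ (j + 1)) * indicator (A j) x) \<partial>M)"
    by (rule nn_integral_mono_AE[OF pointwise])
  also have "\<dots> = (\<Sum>j. ennreal (r ^ (j + 1)) * emeasure M (A j))"
    by (simp add: nn_integral_suminf nn_integral_cmult_indicator)
  also have "\<dots> \<le> (\<Sum>j. ennreal (r * C * (r * \<rho>) ^ j))"
  proof (rule suminf_le)
    fix j
    have "ennreal (r ^ (j + 1)) * emeasure M (A j) \<le> ennreal (r ^ (j + 1)) * ennreal (C * \<rho> ^ j)"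
      by (intro mult_left_mono A_bound) simp
    also have "\<dots> = ennreal (r * C * (r * \<rho>) ^ j)"
      using r1 \<open>0 < C\<close> by (simp add: ennreal_mult[symmetric] power_mult_distrib algebra_simps \<rho>_def)
    finally show "ennreal (r ^ (j + 1)) * emeasure M (A j) \<le> ennreal (r * C * (r * \<rho>) ^ j)" .
  qed auto
  also have "\<dots> = ennreal (\<Sum>j. r * C * (r * \<rho>) ^ j)"
    using geometric r1 \<open>0 < C\<close> by (intro suminf_ennreal2 summable_mult) (auto simp: \<rho>_def)
  also have "\<dots> < \<infinity>"
    by simp
  finally show ?thesis .
qed

lemma nn_integral_log_weight_finite:
  fixes M :: "'a measure" and d :: "'a \<Rightarrow> real"
  assumes [measurable]: "\<Omega> \<in> sets M" "emeasure M \<Omega> < \<infinity>" "d \<in> borel_measurable M"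
    and "\<forall>t\<in>{0<..1}. measure M {x\<in>\<Omega>. d x < t} \<le> C * ln (exp 1 / t) powr (1 - \<sigma>)"
    and "AE x in M. x \<in> \<Omega> \<longrightarrow> 0 < d x \<and> d x < 1 / exp 1"
    and "0 \<le> B" "0 \<le> \<gamma> * P" "\<gamma> * P < \<sigma> - 1" "0 < C"
  shows "(\<integral>\<^sup>+ x\<in>\<Omega>. ennreal ((B * ln (exp 1 / d x) powr \<gamma>) powr P) \<partial>M) < \<infinity>"
proof -
  have "(\<integral>\<^sup>+ x\<in>\<Omega>. ennreal ((B * ln (exp 1 / d x) powr \<gamma>) powr P) \<partial>M)
      = (\<integral>\<^sup>+ x. ennreal (B powr P) * (ennreal (ln (exp 1 / d x) powr (\<gamma> * P)) * indicator \<Omega> x) \<partial>M)"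
    using \<open>0 \<le> B\<close> by (simp add: powr_mult powr_powr ennreal_mult mult.assoc)
  also have "\<dots> = ennreal (B powr P) * (\<integral>\<^sup>+ x\<in>\<Omega>. ennreal (ln (exp 1 / d x) powr (\<gamma> * P)) \<partial>M)"
    by (intro nn_integral_cmult) measurable
  also have "\<dots> < \<infinity>"
    using nn_integral_ln_powr_finite[OF assms(1-5,7-9)] by (simp add: ennreal_mult_less_top)
  finally show ?thesis .
qed

lemma powr_le_weight_plus_powr:
  fixes a M p q P \<eta> :: real
  assumes "0 \<le> a" "1 \<le> M" "0 \<le> q" "q \<le> p" "q \<le> P" "M powr (q - p) \<le> \<eta>"
  shows "a powr q \<le> M powr P + \<eta> * a powr p"
proof (cases "a \<le> M")
  case True
  have "a powr q \<le> M powr q"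
    using True assms by (intro powr_mono2) auto
  also have "\<dots> \<le> M powr P"
    using assms by (intro powr_mono) auto
  moreover have "0 \<le> \<eta> * a powr p"
    using assms(6) by (metis order.trans powr_ge_zero mult_nonneg_nonneg)
  ultimately show ?thesis
    by linarith
next
  case False
  then have "a powr q = a powr (q - p) * a powr p"
    using assms by (simp add: powr_add[symmetric])
  also have "a powr (q - p) \<le> M powr (q - p)"
    using False assms by (intro powr_mono2') auto
  then have "a powr (q - p) * a powr p \<le> \<eta> * a powr p"
    using assms(6) by (intro mult_right_mono) auto
  finally show ?thesis
    using powr_ge_zero[of M P] by linarith
qed

lemma gap_ge_psi_div_ln_ln:
  fixes s p q :: real and \<psi> :: "real \<Rightarrow> real"
  assumes "exp 1 < s" "q < p" "0 < \<psi> s" "1 / (p - q) \<le> ln (ln s) / \<psi> s"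
  shows "\<psi> s / ln (ln s) \<le> p - q"
proof -
  have "1 < ln s"
    using assms(1) by (rule one_less_ln)
  then have "0 < ln (ln s)"
    by simp
  then show ?thesis
    using assms(2-4) by (simp add: field_simps)
qed

lemma one_plus_ln_powr_le_exp:
  fixes s p q \<gamma> L :: real
  assumes "exp 1 < s" "q < p" "0 < \<gamma>" "L \<le> (p - q) * ln (ln s)"
  shows "(1 + ln s) powr (\<gamma> * (q - p)) \<le> exp (- \<gamma> * L)"
proof -
  have "1 < ln s"
    using assms(1) by (rule one_less_ln)
  then have "(p - q) * ln (ln s) \<le> (p - q) * ln (1 + ln s)"
    using \<open>q < p\<close> by (intro mult_left_mono) auto
  then have "\<gamma> * L \<le> \<gamma> * ((p - q) * ln (1 + ln s))"
    using assms(3,4) by (intro mult_left_mono) auto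
  then have "\<gamma> * (q - p) * ln (1 + ln s) \<le> - \<gamma> * L"
    by (simp add: algebra_simps)
  then show ?thesis
    using \<open>1 < ln s\<close> by (simp add: powr_def mult.commute)
qed

text \<open>Far from \<open>K\<close> (\<open>1/d < S\<close>) the monotonicity of \<open>\<psi>(t)/ln ln t\<close> bounds the gap \<open>p - q\<close>
  from below and the factor \<open>B\<close> does the job; close to \<open>K\<close> the growth of \<open>\<psi>\<close> makes
  \<open>ln(e/d)\<^bsup>\<gamma>(q-p)\<^esup>\<close> small.\<close>
lemma log_weight_powr_gap_le:
  fixes \<psi> :: "real \<Rightarrow> real" and d p q B S L \<gamma> \<eta> :: real
  assumes \<psi>_pos: "\<forall>t>exp 1. \<psi> t > 0"
    and \<psi>_mono: "\<forall>s t. exp 1 < s \<and> s \<le> t \<longrightarrow> \<psi> t / ln (ln t) \<le> \<psi> s / ln (ln s)"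
    and S: "exp 1 < S" "\<forall>s\<ge>S. L \<le> \<psi> s"
    and B: "1 \<le> B" "B powr (- (\<psi> S / ln (ln S))) \<le> \<eta>"
    and L: "0 < \<gamma>" "exp (- \<gamma> * L) \<le> \<eta>"
    and d: "0 < d" "d < 1 / exp 1"
    and "q < p" and gap: "1 / (p - q) \<le> ln (ln (1 / d)) / \<psi> (1 / d)"
  shows "(B * ln (exp 1 / d) powr \<gamma>) powr (q - p) \<le> \<eta>"
proof -
  define s where "s = 1 / d"
  define \<Lambda> where "\<Lambda> = ln (exp 1 / d)"
  have s: "exp 1 < s"
    using d by (simp add: s_def field_simps)
  have \<Lambda>: "\<Lambda> = 1 + ln s" "1 < \<Lambda>"
    using d one_less_ln_exp_div[OF d] by (simp_all add: \<Lambda>_def s_def ln_div)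
  have gap': "\<psi> s / ln (ln s) \<le> p - q"
    using gap_ge_psi_div_ln_ln[OF s \<open>q < p\<close>] \<psi>_pos s gap by (simp add: s_def)
  have B_part: "B powr (q - p) \<le> 1"
    using \<open>1 \<le> B\<close> \<open>q < p\<close> powr_mono[of "q - p" 0 B] by simp
  have \<Lambda>_part: "\<Lambda> powr (\<gamma> * (q - p)) \<le> 1"
    using \<Lambda> \<open>0 < \<gamma>\<close> \<open>q < p\<close> powr_mono[of "\<gamma> * (q - p)" 0 \<Lambda>] by (simp add: mult_nonneg_nonpos)
  have "B powr (q - p) * \<Lambda> powr (\<gamma> * (q - p)) \<le> \<eta>"
  proof (cases "S \<le> s")
    case True
    have "\<psi> s \<le> (p - q) * ln (ln s)"
      using gap' one_less_ln[OF s] by (simp add: pos_divide_le_eq)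
    then have "\<Lambda> powr (\<gamma> * (q - p)) \<le> exp (- \<gamma> * L)"
      unfolding \<Lambda>(1) using S(2) True \<open>q < p\<close> L(1) s by (intro one_plus_ln_powr_le_exp) auto
    then show ?thesis
      using B_part L(2) by (meson mult_left_le_one_le order.trans powr_ge_zero)
  next
    case False
    then have "\<psi> S / ln (ln S) \<le> \<psi> s / ln (ln s)"
      using \<psi>_mono s by auto
    then have "\<psi> S / ln (ln S) \<le> p - q"
      using gap' by linarith
    then have "B powr (q - p) \<le> \<eta>"
      using B powr_mono[of "q - p" "- (\<psi> S / ln (ln S))" B] by simp
    then show ?thesis
      using \<Lambda>_part by (meson mult_right_le_one_le order.trans powr_ge_zero)
  qed
  then show ?thesis
    using \<open>1 \<le> B\<close> \<Lambda> by (simp add: \<Lambda>_def powr_mult powr_powr)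
qed

lemma log_weight_dominates_powr:
  fixes \<psi> :: "real \<Rightarrow> real" and \<gamma> \<eta> P :: real
  assumes \<psi>_pos: "\<forall>t>exp 1. \<psi> t > 0"
    and \<psi>_mono: "\<forall>s t. exp 1 < s \<and> s \<le> t \<longrightarrow> \<psi> t / ln (ln t) \<le> \<psi> s / ln (ln s)"
    and \<psi>_lim: "filterlim \<psi> at_top at_top"
    and "0 < \<gamma>" "0 < \<eta>"
  obtains B where "1 \<le> B"
    "\<And>d p q a. 0 < d \<Longrightarrow> d < 1 / exp 1 \<Longrightarrow> 0 \<le> q \<Longrightarrow> q < p \<Longrightarrow> p \<le> P \<Longrightarrow>
       1 / (p - q) \<le> ln (ln (1 / d)) / \<psi> (1 / d) \<Longrightarrow> 0 \<le> a \<Longrightarrow>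
       a powr q \<le> (B * ln (exp 1 / d) powr \<gamma>) powr P + \<eta> * a powr p"
proof -
  define L where "L = - ln \<eta> / \<gamma>"
  have L: "exp (- \<gamma> * L) \<le> \<eta>"
    using \<open>0 < \<gamma>\<close> \<open>0 < \<eta>\<close> by (simp add: L_def)
  obtain S0 where S0: "\<And>s. S0 \<le> s \<Longrightarrow> L \<le> \<psi> s"
    using \<psi>_lim unfolding filterlim_at_top eventually_at_top_linorder by blast
  define S where "S = max S0 (exp 1 + 1)"
  have S: "exp 1 < S" "\<forall>s\<ge>S. L \<le> \<psi> s"
    using S0 by (auto simp: S_def)
  define \<delta> where "\<delta> = \<psi> S / ln (ln S)"
  have "0 < \<delta>"
    unfolding \<delta>_def using \<psi>_pos S(1) one_less_ln[OF S(1)] by simp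
  define B where "B = max 1 (\<eta> powr (-1 / \<delta>))"
  have "1 \<le> B"
    by (simp add: B_def)
  have "B powr (-\<delta>) \<le> (\<eta> powr (-1 / \<delta>)) powr (-\<delta>)"
    using \<open>0 < \<delta>\<close> \<open>0 < \<eta>\<close> unfolding B_def by (intro powr_mono2') auto
  also have "\<dots> = \<eta>"
    using \<open>0 < \<delta>\<close> \<open>0 < \<eta>\<close> by (simp add: powr_powr)
  finally have B_\<delta>: "B powr (- (\<psi> S / ln (ln S))) \<le> \<eta>"
    by (simp add: \<delta>_def)
  show thesis
  proof (rule that[OF \<open>1 \<le> B\<close>])
    fix d p q a :: real
    assume d: "0 < d" "d < 1 / exp 1" and "0 \<le> q" "q < p" "p \<le> P"
      and gap: "1 / (p - q) \<le> ln (ln (1 / d)) / \<psi> (1 / d)" and "0 \<le> a"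
    have "1 \<le> B * ln (exp 1 / d) powr \<gamma>"
      using \<open>1 \<le> B\<close> one_less_ln_exp_div[OF d] \<open>0 < \<gamma>\<close> by (intro mult_ge1_I ge_one_powr_ge_zero) auto
    then show "a powr q \<le> (B * ln (exp 1 / d) powr \<gamma>) powr P + \<eta> * a powr p"
      using log_weight_powr_gap_le[OF \<psi>_pos \<psi>_mono S \<open>1 \<le> B\<close> B_\<delta> \<open>0 < \<gamma>\<close> L d \<open>q < p\<close> gap]
        \<open>0 \<le> a\<close> \<open>0 \<le> q\<close> \<open>q < p\<close> \<open>p \<le> P\<close>
      by (intro powr_le_weight_plus_powr) auto
  qed
qed

lemma lux_norm_nonneg: "0 \<le> lux_norm e \<Omega> u"
  unfolding lux_norm_def by (rule Inf_greatest) auto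

lemma lux_norm_le:
  assumes "0 < l" "var_modular e \<Omega> (\<lambda>x. u x / l) \<le> 1"
  shows "lux_norm e \<Omega> u \<le> ereal l"
  unfolding lux_norm_def by (rule Inf_lower) (use assms in auto)

lemma lux_norm_le_1E:
  assumes "lux_norm e \<Omega> u \<le> 1"
  obtains l where "0 < l" "l < 2" "var_modular e \<Omega> (\<lambda>x. u x / l) \<le> 1"
proof -
  have "lux_norm e \<Omega> u < ereal 2"
    using assms by (rule le_less_trans) simp
  then obtain y where "y \<in> {ereal l | l. l > 0 \<and> var_modular e \<Omega> (\<lambda>x. u x / l) \<le> 1}" "y < ereal 2"
    unfolding lux_norm_def Inf_less_iff by blast
  then show thesis
    using that by auto
qed

lemma powr_le_scaled_weight_plus_powr:
  fixes b v c p q P w \<eta> :: real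
  assumes "\<bar>b\<bar> \<le> c * \<bar>v\<bar>" "1 \<le> c" "0 \<le> q" "q \<le> P"
    and "\<forall>a\<ge>0. a powr q \<le> w + \<eta> * a powr p"
  shows "\<bar>b\<bar> powr q \<le> c powr P * (w + \<eta> * \<bar>v\<bar> powr p)"
proof -
  have "\<bar>b\<bar> powr q \<le> (c * \<bar>v\<bar>) powr q"
    using assms(1,3) by (intro powr_mono2) auto
  also have "\<dots> = c powr q * \<bar>v\<bar> powr q"
    using \<open>1 \<le> c\<close> by (simp add: powr_mult)
  also have "\<dots> \<le> c powr P * (w + \<eta> * \<bar>v\<bar> powr p)"
    using assms by (intro mult_mono powr_mono) auto
  finally show ?thesis .
qed

lemma var_modular_le_weight_plus_modular:
  fixes \<Omega> E :: "'a::euclidean_space set" and f v p q W :: "'a \<Rightarrow> real"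
  assumes [measurable]: "\<Omega> \<in> sets lebesgue" "E \<in> sets lebesgue" "W \<in> borel_measurable lebesgue"
    and v: "set_borel_measurable lebesgue \<Omega> v" and p: "set_borel_measurable lebesgue \<Omega> p"
    and "1 \<le> c" "0 \<le> \<eta>" and q: "\<forall>x\<in>\<Omega>. 0 \<le> q x \<and> q x \<le> P"
    and split: "AE x in lebesgue. x \<in> \<Omega> \<longrightarrow> (\<forall>a\<ge>0. a powr q x \<le> W x + \<eta> * a powr p x)"
    and f: "\<forall>x\<in>\<Omega>. \<bar>f x\<bar> \<le> c * \<bar>v x\<bar> * indicator E x"
  shows "var_modular q \<Omega> f
    \<le> ennreal (c powr P) * ((\<integral>\<^sup>+ x\<in>\<Omega> \<inter> E. ennreal (W x) \<partial>lebesgue) + ennreal \<eta> * var_modular p \<Omega> v)"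
proof -
  define v\<Omega> p\<Omega> where "v\<Omega> x = indicator \<Omega> x *\<^sub>R v x" and "p\<Omega> x = indicator \<Omega> x *\<^sub>R p x" for x
  have [measurable]: "v\<Omega> \<in> borel_measurable lebesgue" "p\<Omega> \<in> borel_measurable lebesgue"
    using v p unfolding v\<Omega>_def p\<Omega>_def set_borel_measurable_def by auto
  define V where "V x = indicator \<Omega> x * \<bar>v\<Omega> x\<bar> powr p\<Omega> x" for x
  have [measurable]: "V \<in> borel_measurable lebesgue"
    unfolding V_def by measurable
  have V: "ennreal (\<bar>v x\<bar> powr p x) * indicator \<Omega> x = ennreal (V x)" for x
    by (simp add: V_def v\<Omega>_def p\<Omega>_def split: split_indicator)
  have pointwise: "AE x in lebesgue. ennreal (\<bar>f x\<bar> powr q x) * indicator \<Omega> x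
      \<le> ennreal (c powr P) * (ennreal (W x) * indicator (\<Omega> \<inter> E) x + ennreal \<eta> * ennreal (V x))"
    using split
  proof eventually_elim
    case (elim x)
    show ?case
    proof (cases "x \<in> \<Omega> \<and> x \<in> E")
      case True
      have le: "\<bar>f x\<bar> powr q x \<le> c powr P * (W x + \<eta> * \<bar>v x\<bar> powr p x)"
        using True f q elim \<open>1 \<le> c\<close> by (intro powr_le_scaled_weight_plus_powr) auto
      have "0 \<le> W x"
        using True elim[rule_format, of 0] by simp
      then have "ennreal (c powr P * (W x + \<eta> * \<bar>v x\<bar> powr p x))
          = ennreal (c powr P) * (ennreal (W x) + ennreal \<eta> * ennreal (\<bar>v x\<bar> powr p x))"
        using \<open>0 \<le> \<eta>\<close> by (simp add: ennreal_mult ennreal_plus)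
      moreover have "V x = \<bar>v x\<bar> powr p x"
        using True by (simp add: V_def v\<Omega>_def p\<Omega>_def)
      ultimately show ?thesis
        using True ennreal_leI[OF le] by simp
    next
      case False
      then have "ennreal (\<bar>f x\<bar> powr q x) * indicator \<Omega> x = 0"
        using f by (auto split: split_indicator)
      then show ?thesis
        by (metis zero_le)
    qed
  qed
  have "var_modular q \<Omega> f \<le> (\<integral>\<^sup>+ x. ennreal (c powr P) *
      (ennreal (W x) * indicator (\<Omega> \<inter> E) x + ennreal \<eta> * ennreal (V x)) \<partial>lebesgue)"
    unfolding var_modular_def by (rule nn_integral_mono_AE[OF pointwise])
  also have "\<dots> = ennreal (c powr P) * ((\<integral>\<^sup>+ x\<in>\<Omega> \<inter> E. ennreal (W x) \<partial>lebesgue)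
      + ennreal \<eta> * (\<integral>\<^sup>+ x. ennreal (V x) \<partial>lebesgue))"
    by (simp add: nn_integral_cmult nn_integral_add)
  also have "(\<integral>\<^sup>+ x. ennreal (V x) \<partial>lebesgue) = var_modular p \<Omega> v"
    unfolding var_modular_def V[symmetric] ..
  finally show ?thesis .
qed

lemma nn_integral_on_vanishing_sets_tendsto_0:
  fixes W :: "'a \<Rightarrow> ennreal"
  assumes [measurable]: "\<Omega> \<in> sets M" "W \<in> borel_measurable M" "\<And>n. E n \<in> sets M"
    and finite: "(\<integral>\<^sup>+ x\<in>\<Omega>. W x \<partial>M) < \<infinity>"
    and vanishing: "AE x in M. x \<in> \<Omega> \<longrightarrow> (\<lambda>n. indicator (E n) x :: real) \<longlonglongrightarrow> 0"
  shows "(\<lambda>n. \<integral>\<^sup>+ x\<in>\<Omega> \<inter> E n. W x \<partial>M) \<longlonglongrightarrow> 0"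
proof -
  have "(\<lambda>n. \<integral>\<^sup>+ x\<in>\<Omega> \<inter> E n. W x \<partial>M) \<longlonglongrightarrow> (\<integral>\<^sup>+ x. 0 \<partial>M)"
  proof (rule nn_integral_dominated_convergence[where w = "\<lambda>x. W x * indicator \<Omega> x"])
    show "AE x in M. W x * indicator (\<Omega> \<inter> E n) x \<le> W x * indicator \<Omega> x" for n
      by (auto split: split_indicator)
    show "AE x in M. (\<lambda>n. W x * indicator (\<Omega> \<inter> E n) x) \<longlonglongrightarrow> 0"
      using vanishing
    proof eventually_elim
      case (elim x)
      show ?case
      proof (cases "x \<in> \<Omega>")
        case True
        then have "eventually (\<lambda>n. dist (indicator (E n) x :: real) 0 < 1) sequentially"
          using elim by (intro tendstoD) auto
        then have "eventually (\<lambda>n. W x * indicator (\<Omega> \<inter> E n) x = 0) sequentially"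
          by (rule eventually_mono) (auto split: split_indicator)
        then show ?thesis
          by (rule tendsto_eventually)
      qed simp
    qed
  qed (use finite in auto)
  then show ?thesis
    by simp
qed

lemma LIMSEQ_ereal_0I:
  fixes X :: "nat \<Rightarrow> ereal"
  assumes "\<And>n. 0 \<le> X n" "\<And>\<epsilon>. 0 < \<epsilon> \<Longrightarrow> eventually (\<lambda>n. X n \<le> ereal \<epsilon>) sequentially"
  shows "X \<longlonglongrightarrow> 0"
proof (rule order_tendstoI)
  fix a :: ereal
  assume "a < 0"
  then show "eventually (\<lambda>n. a < X n) sequentially"
    using assms(1) by (intro always_eventually) (auto intro: less_le_trans)
next
  fix a :: ereal
  assume "0 < a"
  then obtain b :: real where "0 < ereal b" "ereal b < a"
    using ereal_dense2 by blast
  then show "eventually (\<lambda>n. X n < a) sequentially"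
    using assms(2)[of b] by (auto elim: eventually_mono intro: le_less_trans)
qed

definition dominating_weight ::
    "'a::euclidean_space set \<Rightarrow> ('a \<Rightarrow> real) \<Rightarrow> ('a \<Rightarrow> real) \<Rightarrow> real \<Rightarrow> ('a \<Rightarrow> real) \<Rightarrow> bool" where
  "dominating_weight \<Omega> p q \<eta> W \<longleftrightarrow> W \<in> borel_measurable lebesgue \<and>
     (\<integral>\<^sup>+ x\<in>\<Omega>. ennreal (W x) \<partial>lebesgue) < \<infinity> \<and>
     (AE x in lebesgue. x \<in> \<Omega> \<longrightarrow> (\<forall>a\<ge>0. a powr q x \<le> W x + \<eta> * a powr p x))"

lemma lux_norm_restrict_le:
  fixes \<Omega> E :: "'a::euclidean_space set" and p q W u :: "'a \<Rightarrow> real"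
  assumes [measurable]: "\<Omega> \<in> sets lebesgue" "E \<in> sets lebesgue"
    and p: "set_borel_measurable lebesgue \<Omega> p" and q: "\<forall>x\<in>\<Omega>. 0 \<le> q x \<and> q x \<le> P"
    and W: "dominating_weight \<Omega> p q \<eta> W" "(\<integral>\<^sup>+ x\<in>\<Omega> \<inter> E. ennreal (W x) \<partial>lebesgue) \<le> \<eta>"
    and "0 \<le> \<eta>" "0 < t" "2 * \<eta> * max 1 (2 / t) powr P \<le> 1"
    and u: "u \<in> var_Lp p \<Omega>" "lux_norm p \<Omega> u \<le> 1"
  shows "lux_norm q \<Omega> (\<lambda>x. u x * indicator E x) \<le> ereal t"
proof (rule lux_norm_le[OF \<open>0 < t\<close>])
  define c where "c = max 1 (2 / t)"
  obtain l where "0 < l" "l < 2" and unit: "var_modular p \<Omega> (\<lambda>x. u x / l) \<le> 1"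
    using u(2) by (rule lux_norm_le_1E)
  have "set_borel_measurable lebesgue \<Omega> (\<lambda>x. u x / l)"
    using u(1) unfolding var_Lp_def set_borel_measurable_def by (auto intro!: borel_measurable_divide)
  moreover have "\<bar>u x * indicator E x / t\<bar> \<le> c * \<bar>u x / l\<bar> * indicator E x" for x
  proof -
    have "\<bar>u x\<bar> / t = 2 / t * \<bar>u x\<bar> / 2"
      by simp
    also have "\<dots> \<le> c * \<bar>u x\<bar> / l"
      using \<open>0 < l\<close> \<open>l < 2\<close> \<open>0 < t\<close> by (intro frac_le mult_right_mono) (auto simp: c_def)
    finally show ?thesis
      using \<open>0 < t\<close> \<open>0 < l\<close> by (simp add: abs_mult split: split_indicator)
  qed
  ultimately have "var_modular q \<Omega> (\<lambda>x. u x * indicator E x / t)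
      \<le> ennreal (c powr P) * ((\<integral>\<^sup>+ x\<in>\<Omega> \<inter> E. ennreal (W x) \<partial>lebesgue)
        + ennreal \<eta> * var_modular p \<Omega> (\<lambda>x. u x / l))"
    using q p W(1) \<open>0 \<le> \<eta>\<close>
    by (intro var_modular_le_weight_plus_modular) (auto simp: c_def dominating_weight_def)
  also have "\<dots> \<le> ennreal (c powr P) * (ennreal \<eta> + ennreal \<eta> * 1)"
    using W(2) unit by (intro mult_left_mono add_mono) auto
  also have "\<dots> = ennreal (2 * \<eta> * c powr P)"
    using \<open>0 \<le> \<eta>\<close> by (simp add: ennreal_mult[symmetric] ennreal_plus[symmetric] algebra_simps)
  also have "\<dots> \<le> 1"
    using \<open>2 * \<eta> * max 1 (2 / t) powr P \<le> 1\<close> by (simp add: c_def ennreal_le_1)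
  finally show "var_modular q \<Omega> (\<lambda>x. u x * indicator E x / t) \<le> 1" .
qed

lemma almost_compact_embI:
  fixes \<Omega> :: "'a::euclidean_space set" and p q :: "'a \<Rightarrow> real"
  assumes [measurable]: "\<Omega> \<in> sets lebesgue" and p: "set_borel_measurable lebesgue \<Omega> p"
    and q: "\<forall>x\<in>\<Omega>. 0 \<le> q x \<and> q x \<le> P"
    and weights: "\<And>\<eta>. 0 < \<eta> \<Longrightarrow> \<exists>W. dominating_weight \<Omega> p q \<eta> W"
  shows "almost_compact_emb \<Omega> p q"
  unfolding almost_compact_emb_def
proof (intro allI impI LIMSEQ_ereal_0I)
  fix E :: "nat \<Rightarrow> 'a set" and n
  assume E: "(\<forall>n. E n \<in> sets lebesgue \<and> E n \<subseteq> \<Omega>) \<and>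
    (AE x in lebesgue. x \<in> \<Omega> \<longrightarrow> (\<lambda>n. indicator (E n) x :: real) \<longlonglongrightarrow> 0)"
  then have [measurable]: "E n \<in> sets lebesgue" for n
    by auto
  define ball where "ball = {u \<in> var_Lp p \<Omega>. lux_norm p \<Omega> u \<le> 1}"
  have "(\<lambda>x. 0) \<in> ball"
    using lux_norm_le[of 1 p \<Omega> "\<lambda>x. 0"]
    by (auto simp: ball_def var_Lp_def var_modular_def set_borel_measurable_def one_ereal_def)
  then show "0 \<le> (SUP u\<in>ball. lux_norm q \<Omega> (\<lambda>x. u x * indicator (E n) x))"
    by (rule SUP_upper2) (rule lux_norm_nonneg)
  fix t :: real
  assume "0 < t"
  define \<eta> where "\<eta> = 1 / (2 * max 1 (2 / t) powr P)"
  have "0 < \<eta>" "2 * \<eta> * max 1 (2 / t) powr P \<le> 1"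
    by (auto simp: \<eta>_def)
  obtain W where W: "dominating_weight \<Omega> p q \<eta> W"
    using weights[OF \<open>0 < \<eta>\<close>] by blast
  then have "(\<lambda>n. \<integral>\<^sup>+ x\<in>\<Omega> \<inter> E n. ennreal (W x) \<partial>lebesgue) \<longlonglongrightarrow> 0"
    using E by (intro nn_integral_on_vanishing_sets_tendsto_0) (auto simp: dominating_weight_def)
  then have "eventually (\<lambda>n. (\<integral>\<^sup>+ x\<in>\<Omega> \<inter> E n. ennreal (W x) \<partial>lebesgue) < ennreal \<eta>) sequentially"
    using \<open>0 < \<eta>\<close> by (intro order_tendstoD(2)) auto
  then show "eventually (\<lambda>n. (SUP u\<in>ball. lux_norm q \<Omega> (\<lambda>x. u x * indicator (E n) x)) \<le> ereal t)
      sequentially"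
    by (rule eventually_mono, intro SUP_least lux_norm_restrict_le[OF _ _ p q W])
      (use \<open>0 < t\<close> \<open>0 < \<eta>\<close> \<open>2 * \<eta> * _ \<le> 1\<close> in \<open>auto simp: ball_def\<close>)
qed

lemma borel_measurable_infdist_lebesgue:
  "(\<lambda>x. infdist x K) \<in> borel_measurable (lebesgue :: 'a::euclidean_space measure)"
  by (rule measurable_completion, simp only: measurable_lborel2)
    (intro borel_measurable_continuous_onI continuous_intros)

theorem mainTheorem12:
  fixes \<Omega> K :: "'a::euclidean_space set"
    and p q :: "'a \<Rightarrow> real" and p_plus C \<sigma> :: real and \<psi> :: "real \<Rightarrow> real"
  assumes "open \<Omega>" and "bounded \<Omega>"
    and "set_borel_measurable lebesgue \<Omega> p" and "set_borel_measurable lebesgue \<Omega> q"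
    and "\<forall>x\<in>\<Omega>. 1 \<le> q x \<and> q x \<le> p x \<and> p x \<le> p_plus"
    and "compact K" and "K \<subseteq> \<Omega>"
    and "C > 0" and "\<sigma> > 1"
    and "\<forall>t\<in>{0<..1}. measure lebesgue {x\<in>\<Omega>. infdist x K < t} \<le> C * (ln (exp 1 / t)) powr (1 - \<sigma>)"
    and "\<forall>t>exp 1. \<psi> t > 0"
    and "\<forall>s t. exp 1 < s \<and> s \<le> t \<longrightarrow> \<psi> t / ln (ln t) \<le> \<psi> s / ln (ln s)"
    and "filterlim \<psi> at_top at_top"
    and "AE x in lebesgue. x \<in> \<Omega> \<longrightarrow>
           0 < infdist x K \<and> infdist x K < 1 / exp 1 \<and> q x < p x \<and>
           1 / (p x - q x) \<le> ln (ln (1 / infdist x K)) / \<psi> (1 / infdist x K)"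
  shows "almost_compact_emb \<Omega> p q"
proof -
  note borel_measurable_infdist_lebesgue[measurable]
  have \<Omega>[measurable]: "\<Omega> \<in> sets lebesgue" and \<Omega>_finite: "emeasure lebesgue \<Omega> < \<infinity>"
    using lmeasurable_open[OF assms(2,1)] by (auto simp: fmeasurable_def)
  define P where "P = max p_plus 1" (* \<Omega> may be empty, so 1 \<le> p_plus is not given *)
  define \<gamma> where "\<gamma> = (\<sigma> - 1) / (2 * P)"
  have "0 < \<gamma>" "0 \<le> \<gamma> * P" "\<gamma> * P < \<sigma> - 1"
    using assms(9) by (auto simp: \<gamma>_def P_def)
  have pq: "\<forall>x\<in>\<Omega>. 0 \<le> q x \<and> q x \<le> p x \<and> p x \<le> P"
    using assms(5) by (force simp: P_def)
  show ?thesis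
  proof (rule almost_compact_embI[OF \<Omega> assms(3), where P = P])
    fix \<eta> :: real
    assume "0 < \<eta>"
    obtain B where "1 \<le> B" and dominates: "\<And>d p q a. 0 < d \<Longrightarrow> d < 1 / exp 1 \<Longrightarrow> 0 \<le> q \<Longrightarrow>
        q < p \<Longrightarrow> p \<le> P \<Longrightarrow> 1 / (p - q) \<le> ln (ln (1 / d)) / \<psi> (1 / d) \<Longrightarrow> 0 \<le> a \<Longrightarrow>
        a powr q \<le> (B * ln (exp 1 / d) powr \<gamma>) powr P + \<eta> * a powr p"
      using log_weight_dominates_powr[OF assms(11-13) \<open>0 < \<gamma>\<close> \<open>0 < \<eta>\<close>] by blast
    have "AE x in lebesgue. x \<in> \<Omega> \<longrightarrow> 0 < infdist x K \<and> infdist x K < 1 / exp 1"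
      using assms(14) by eventually_elim auto
    then have "(\<integral>\<^sup>+ x\<in>\<Omega>. ennreal ((B * ln (exp 1 / infdist x K) powr \<gamma>) powr P) \<partial>lebesgue) < \<infinity>"
      using assms(8,10) \<open>1 \<le> B\<close> \<open>0 \<le> \<gamma> * P\<close> \<open>\<gamma> * P < \<sigma> - 1\<close>
      by (intro nn_integral_log_weight_finite[OF \<Omega> \<Omega>_finite]) auto
    moreover have "AE x in lebesgue. x \<in> \<Omega> \<longrightarrow> (\<forall>a\<ge>0. a powr q x \<le>
        (B * ln (exp 1 / infdist x K) powr \<gamma>) powr P + \<eta> * a powr p x)"
      using assms(14) by eventually_elim (use pq in \<open>auto intro!: dominates\<close>)
    ultimately show "\<exists>W. dominating_weight \<Omega> p q \<eta> W"
      unfolding dominating_weight_def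
      by (intro exI[of _ "\<lambda>x. (B * ln (exp 1 / infdist x K) powr \<gamma>) powr P"]) simp
  qed (use pq in auto)
qed

end
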